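(* Work in the semifield $\mathbb{R}_{\max,+}$. Let $\bm{r}_1,\ldots,\bm{r}_m\in\mathbb{R}^{n}$ and $w_1,\ldots,w_m\in\mathbb{R}$, let $\bm{p}=w_1\bm{r}_1\oplus\cdots\oplus w_m\bm{r}_m$ and $\bm{q}^{-}=w_1\bm{r}_1^{-}\oplus\cdots\oplus w_m\bm{r}_m^{-}$, and let $\varphi(\bm{x})=\bm{x}^{-}\bm{p}\oplus\bm{q}^{-}\bm{x}$ (which equals $\max_{i}(\rho(\bm{r}_i,\bm{x})+w_i)$ with $\rho$ the Chebyshev distance). Let $A=(a_{ij})\in\mathbb{R}_{\max,+}^{n\times n}$ be an irreducible matrix with $\mathrm{Tr}(A)=\mathbb{1}$, let $S_0=\{\bm{x}\in\mathbb{R}^n\mid A\bm{x}=\bm{x}\}$ (i.e. $\max_{j}(a_{ij}+x_j)=x_i$ for all $i$), and put $$\Delta=\sqrt{(A^{+}(\bm{q}^{-}A^{+})^{-})^{-}\bm{p}}.$$ Then $\min_{\bm{x}\in S_0}\varphi(\bm{x})=\Delta$, and the minimum is attained at $\bm{x}=\Delta A^{+}(\bm{q}^{-}A^{+})^{-}$.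
   Context: $\mathbb{R}_{\max,+}=(\mathbb{R}\cup\{-\infty\},-\infty,0,\max,+)$: $x\oplus y=\max(x,y)$, $x\otimes y=x+y$ (sign omitted), zero $\mathbb{0}=-\infty$, identity $\mathbb{1}=0$, $x^{-1}=-x$, $\sqrt{x}=x/2$. Matrix and vector operations are the usual ones with $\max$ in place of sum and $+$ in place of product. For a nonzero column (or row) vector $\bm{x}=(x_j)$, the pseudo-inverse $\bm{x}^{-}$ is the row (resp. column) vector with entries $-x_j$ if $x_j\ne-\infty$ and $-\infty$ otherwise; $\bm{q}$ is the column vector with $\bm{q}^{-}$ as its pseudo-inverse. $I$ is the identity matrix (0 on diagonal, $-\infty$ elsewhere), $A^0=I$, $A^{k}=A^{k-1}A$. A square matrix is irreducible if it cannot be brought to block-triangular form by simultaneous permutation of rows and columns. $\mathrm{tr}A=\bigoplus_i a_{ii}$ and $\mathrm{Tr}(A)=\bigoplus_{k=1}^{n}\mathrm{tr}A^{k}$. Let $A^{\ast}=I\oplus A\oplus\cdots\oplus A^{n-1}$ and $A^{\times}=AA^{\ast}$. The matrix $A^{+}$ is formed as follows: for each column $\bm{a}^{\times}_i$ of $A^{\times}$, keep it if its diagonal entry $a^{\times}_{ii}$ equals $\mathbb{1}$ and replace it by the zero vector otherwise; then remove the columns (including zero ones) that are linearly dependent on the others (a vector $\bm{y}$ is linearly dependent on $\bm{x}_1,\ldots,\bm{x}_k$ if $\bm{y}=c_1\bm{x}_1\oplus\cdots\oplus c_k\bm{x}_k$ for some scalars $c_i$); the remaining columns form $A^{+}$.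 *)

theory Defs
  imports "HOL-Library.Extended_Real" "HOL-Combinatorics.Permutations"
begin

text \<open>Max-plus algebra R_max,+ modelled inside ereal: the max-plus zero is -\<infinity>,
  the identity is 0, addition is max (Sup), multiplication is +.
  Vectors are nat \<Rightarrow> ereal, matrices nat \<Rightarrow> nat \<Rightarrow> ereal; only indices
  in the stated (finite) index sets matter.\<close>

type_synonym mpvec = "nat \<Rightarrow> ereal"
type_synonym mpmat = "nat \<Rightarrow> nat \<Rightarrow> ereal"

definition mp_mm :: "nat set \<Rightarrow> mpmat \<Rightarrow> mpmat \<Rightarrow> mpmat" where
  "mp_mm K A B = (\<lambda>i j. SUP k\<in>K. A i k + B k j)"

definition mp_mv :: "nat set \<Rightarrow> mpmat \<Rightarrow> mpvec \<Rightarrow> mpvec" where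
  "mp_mv K A x = (\<lambda>i. SUP k\<in>K. A i k + x k)"

definition mp_vm :: "nat set \<Rightarrow> mpvec \<Rightarrow> mpmat \<Rightarrow> mpvec" where
  "mp_vm K u A = (\<lambda>j. SUP k\<in>K. u k + A k j)"

definition mp_dot :: "nat set \<Rightarrow> mpvec \<Rightarrow> mpvec \<Rightarrow> ereal" where
  "mp_dot K u v = (SUP k\<in>K. u k + v k)"

text \<open>Pseudo-inverse of a vector (row \<leftrightarrow> column, entrywise).\<close>
definition mp_pinv :: "mpvec \<Rightarrow> mpvec" where
  "mp_pinv x = (\<lambda>j. if x j = -\<infinity> then -\<infinity> else - x j)"

definition mp_id :: mpmat where
  "mp_id = (\<lambda>i j. if i = j then 0 else -\<infinity>)"

fun mp_pow :: "nat \<Rightarrow> mpmat \<Rightarrow> nat \<Rightarrow> mpmat" where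
  "mp_pow n A 0 = mp_id"
| "mp_pow n A (Suc k) = mp_mm {..<n} (mp_pow n A k) A"

definition mp_tr :: "nat \<Rightarrow> mpmat \<Rightarrow> ereal" where
  "mp_tr n A = (SUP i\<in>{..<n}. A i i)"

definition mp_Tr :: "nat \<Rightarrow> mpmat \<Rightarrow> ereal" where
  "mp_Tr n A = (SUP k\<in>{1..n}. mp_tr n (mp_pow n A k))"

definition mp_star :: "nat \<Rightarrow> mpmat \<Rightarrow> mpmat" where
  "mp_star n A = (\<lambda>i j. SUP k\<in>{..<n}. mp_pow n A k i j)"

definition mp_cross :: "nat \<Rightarrow> mpmat \<Rightarrow> mpmat" where
  "mp_cross n A = mp_mm {..<n} A (mp_star n A)"

definition mp_irreducible :: "nat \<Rightarrow> mpmat \<Rightarrow> bool" where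
  "mp_irreducible n A \<longleftrightarrow>
     \<not> (\<exists>\<sigma> k. \<sigma> permutes {..<n} \<and> 0 < k \<and> k < n \<and>
          (\<forall>i<k. \<forall>j. k \<le> j \<and> j < n \<longrightarrow> A (\<sigma> i) (\<sigma> j) = -\<infinity>))"

text \<open>Linear dependence of an n-vector y on the columns of M indexed by C
  (scalars from R_max,+, i.e. ereal values other than +\<infinity>).\<close>
definition mp_dependent :: "nat \<Rightarrow> mpvec \<Rightarrow> mpmat \<Rightarrow> nat set \<Rightarrow> bool" where
  "mp_dependent n y M C \<longleftrightarrow>
     (\<exists>c::nat \<Rightarrow> ereal. (\<forall>k\<in>C. c k \<noteq> \<infinity>) \<and> (\<forall>i<n. y i = (SUP k\<in>C. c k + M i k)))"

definition mp_kept :: "nat \<Rightarrow> mpmat \<Rightarrow> nat set" where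
  "mp_kept n A = {j. j < n \<and> mp_cross n A j j = 0}"

definition mp_col_repl :: "nat \<Rightarrow> mpmat \<Rightarrow> mpmat" where
  "mp_col_repl n A = (\<lambda>i j. if j \<in> mp_kept n A then mp_cross n A i j else -\<infinity>)"

text \<open>J is a valid outcome of the column-removal procedure: A^+ is the matrix whose
  columns are the columns of A^x with indices in J.\<close>
definition mp_Aplus_cols :: "nat \<Rightarrow> mpmat \<Rightarrow> nat set \<Rightarrow> bool" where
  "mp_Aplus_cols n A J \<longleftrightarrow>
     J \<subseteq> {..<n} \<and>
     (\<forall>j\<in>J. \<not> mp_dependent n (\<lambda>i. mp_col_repl n A i j) (mp_col_repl n A) (J - {j})) \<and>
     (\<forall>j<n. mp_dependent n (\<lambda>i. mp_col_repl n A i j) (mp_col_repl n A) J)"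

end

theory Submission
  imports Defs
begin

text \<open>Entries of A^x are maximal weights of walks of length 1..n. As Tr A = 0, no cycle has
  positive weight, so A^x dominates all walks, its critical columns (zero diagonal entry) are
  eigenvectors, and by irreducibility all its entries are finite. Every eigenvector x satisfies
  x_i \<le> A^x_ij + x_j for some critical j, and the columns J of A^+ generate the critical columns.
  Hence with u = A^+ (q^- A^+)^-, every x in S_0 satisfies x \<le> t + u for t = q^- x, so that
  x^- p \<ge> u^- p - t and phi(x) \<ge> max(t, u^- p - t) \<ge> (u^- p) / 2 = Delta. Since q^- u = 0,
  the point x_0 = Delta + u attains this bound.\<close>

declare mp_id_def [simp]

lemma MInf_plus_ereal [simp]: "b \<noteq> \<infinity> \<Longrightarrow> -\<infinity> + b = (-\<infinity> :: ereal)"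
  by (cases b) auto

lemma ereal_plus_MInf [simp]: "a \<noteq> \<infinity> \<Longrightarrow> a + -\<infinity> = (-\<infinity> :: ereal)"
  by (cases a) auto

lemma finite_SUP_attained:
  fixes f :: "'a \<Rightarrow> 'b::complete_linorder"
  assumes "finite I" "I \<noteq> {}"
  obtains i where "i \<in> I" "(SUP i\<in>I. f i) = f i"
proof -
  have "Sup (f ` I) = Max (f ` I)" using assms by (simp add: Max_Sup)
  moreover have "Max (f ` I) \<in> f ` I" using assms by (intro Max_in) auto
  ultimately show ?thesis using that by auto
qed

lemma Max_image_attained:
  assumes "finite I" "I \<noteq> {}"
  obtains i where "i \<in> I" "Max (f ` I) = f i"
proof -
  have "Max (f ` I) \<in> f ` I" using assms by (intro Max_in) auto
  then show ?thesis using that by blast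
qed

lemma SUP_ereal_eq_Max:
  assumes "finite I" "I \<noteq> {}"
  shows "(SUP i\<in>I. ereal (f i)) = ereal (Max (f ` I))"
proof -
  have "ereal (Max (f ` I)) = Max (ereal ` f ` I)"
    using assms by (intro mono_Max_commute) (auto simp: mono_def)
  also have "\<dots> = (SUP i\<in>I. ereal (f i))" using assms by (simp add: Max_Sup image_image)
  finally show ?thesis ..
qed

lemma mp_dot_ereal_Max:
  assumes "finite K" "K \<noteq> {}" "\<And>k. k \<in> K \<Longrightarrow> x k = ereal (a k)" "\<And>k. k \<in> K \<Longrightarrow> y k = ereal (b k)"
  shows "mp_dot K x y = ereal (Max ((\<lambda>k. a k + b k) ` K))"
  unfolding mp_dot_def using assms by (simp add: SUP_ereal_eq_Max[symmetric])

lemma mp_pinv_ereal: "x k = ereal a \<Longrightarrow> mp_pinv x k = ereal (- a)"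
  by (simp add: mp_pinv_def)

lemma max_mp_dot_ereal:
  assumes "finite K" "K \<noteq> {}" "\<And>k. k \<in> K \<Longrightarrow> x k = ereal (a k)"
    "\<And>k. k \<in> K \<Longrightarrow> p k = ereal (b k)" "\<And>k. k \<in> K \<Longrightarrow> q k = ereal (c k)"
  shows "max (mp_dot K (mp_pinv x) p) (mp_dot K q x)
    = ereal (max (Max ((\<lambda>k. b k - a k) ` K)) (Max ((\<lambda>k. c k + a k) ` K)))"
proof -
  have "mp_dot K (mp_pinv x) p = ereal (Max ((\<lambda>k. - a k + b k) ` K))"
    by (rule mp_dot_ereal_Max) (use assms in \<open>simp_all add: mp_pinv_def\<close>)
  moreover have "mp_dot K q x = ereal (Max ((\<lambda>k. c k + a k) ` K))"
    by (rule mp_dot_ereal_Max) (use assms in simp_all)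
  ultimately show ?thesis by simp
qed

lemma pigeonhole_repeat:
  assumes "\<forall>t\<le>n. f t < (n::nat)"
  obtains a b where "a < b" "b \<le> n" "f a = f b"
proof -
  have "\<not> inj_on f {..n}"
  proof
    assume "inj_on f {..n}"
    then have "card (f ` {..n}) = Suc n" by (simp add: card_image)
    moreover have "card (f ` {..n}) \<le> n"
      using assms card_mono[of "{..<n}" "f ` {..n}"] by fastforce
    ultimately show False by simp
  qed
  then show ?thesis using that unfolding inj_on_def by (metis atMost_iff linorder_neqE_nat)
qed

text \<open>Enumerating S first and its complement afterwards exhibits the block-triangular form.\<close>

lemma closed_subset_not_irreducible:
  assumes S: "S \<subseteq> {..<n}" "S \<noteq> {}" "S \<noteq> {..<n}"
    and closed: "\<And>a b. a \<in> S \<Longrightarrow> b \<in> {..<n} - S \<Longrightarrow> A a b = -\<infinity>"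
  shows "\<not> mp_irreducible n A"
proof -
  define T where "T = {..<n} - S"
  define k where "k = card S"
  have finS: "finite S" using S(1) finite_subset by blast
  have k0: "0 < k" using S(2) finS by (auto simp: k_def card_gt_0_iff)
  have kn: "k < n" using S psubset_card_mono[of "{..<n}" S] by (auto simp: k_def)
  have cT: "card T = n - k" unfolding T_def k_def using S(1) by (simp add: card_Diff_subset finS)
  obtain h1 where h1: "bij_betw h1 {0..<k} S" using ex_bij_betw_nat_finite[OF finS] k_def by auto
  obtain h2 where h2: "bij_betw h2 {0..<n-k} T"
    using ex_bij_betw_nat_finite[of T] cT by (auto simp: T_def)
  define \<sigma> where "\<sigma> x = (if x < k then h1 x else if x < n then h2 (x - k) else x)" for x
  have b1: "bij_betw \<sigma> {0..<k} S"
    using h1 by (rule bij_betw_cong[THEN iffD1, rotated]) (auto simp: \<sigma>_def)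
  have "bij_betw (\<lambda>x. x - k) {k..<n} {0..<n-k}"
    by (rule bij_betw_byWitness[where f'="\<lambda>x. x + k"]) auto
  then have "bij_betw (h2 \<circ> (\<lambda>x. x - k)) {k..<n} T" using h2 by (rule bij_betw_trans)
  then have b2: "bij_betw \<sigma> {k..<n} T"
    by (rule bij_betw_cong[THEN iffD1, rotated]) (auto simp: \<sigma>_def)
  have "bij_betw \<sigma> ({0..<k} \<union> {k..<n}) (S \<union> T)"
    by (rule bij_betw_combine[OF b1 b2]) (auto simp: T_def)
  moreover have "{0..<k} \<union> {k..<n} = {..<n}" "S \<union> T = {..<n}" using kn S(1) by (auto simp: T_def)
  ultimately have "\<sigma> permutes {..<n}"
    by (intro bij_imp_permutes) (use kn in \<open>auto simp: \<sigma>_def\<close>)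
  moreover have "A (\<sigma> i) (\<sigma> j) = -\<infinity>" if "i < k" "k \<le> j" "j < n" for i j
    using that bij_betw_apply[OF b1] bij_betw_apply[OF b2] closed by (simp add: T_def)
  ultimately show ?thesis using k0 kn unfolding mp_irreducible_def by blast
qed

definition walk_weight :: "mpmat \<Rightarrow> (nat \<Rightarrow> nat) \<Rightarrow> nat \<Rightarrow> nat \<Rightarrow> ereal" where
  "walk_weight A f a b = (\<Sum>t\<in>{a..<b}. A (f t) (f (Suc t)))"

lemma walk_weight_split:
  "a \<le> b \<Longrightarrow> b \<le> c \<Longrightarrow> walk_weight A f a c = walk_weight A f a b + walk_weight A f b c"
  unfolding walk_weight_def by (simp add: sum.atLeastLessThan_concat)

lemma walk_weight_Suc:
  "a \<le> b \<Longrightarrow> walk_weight A f a (Suc b) = walk_weight A f a b + A (f b) (f (Suc b))"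
  unfolding walk_weight_def by simp

locale mp_matrix =
  fixes n :: nat and A :: mpmat
  assumes entries_not_PInf: "\<And>i j. i < n \<Longrightarrow> j < n \<Longrightarrow> A i j \<noteq> \<infinity>"
begin

abbreviation apow :: "nat \<Rightarrow> mpmat" where "apow \<equiv> mp_pow n A"

definition mp_eigen :: "(nat \<Rightarrow> real) \<Rightarrow> bool" where
  "mp_eigen x \<longleftrightarrow> (\<forall>i<n. mp_mv {..<n} A (\<lambda>k. ereal (x k)) i = ereal (x i))"

lemma mp_eigen_iff:
  assumes "\<And>k. k < n \<Longrightarrow> x k = ereal (xr k)"
  shows "(\<forall>i<n. mp_mv {..<n} A x i = x i) \<longleftrightarrow> mp_eigen xr"
  unfolding mp_eigen_def mp_mv_def using assms by simp

lemma apow_Suc: "apow (Suc l) i j = (SUP k\<in>{..<n}. apow l i k + A k j)"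
  by (simp add: mp_mm_def)

lemma apow_Suc_attained:
  assumes "i < n"
  obtains k where "k < n" "apow (Suc l) i j = apow l i k + A k j"
proof -
  have "{..<n} \<noteq> {}" using assms by auto
  then show ?thesis
    using that finite_SUP_attained[of "{..<n}" "\<lambda>k. apow l i k + A k j"] unfolding apow_Suc by auto
qed

lemma apow_not_PInf: "i < n \<Longrightarrow> j < n \<Longrightarrow> apow l i j \<noteq> \<infinity>"
proof (induction l arbitrary: j)
  case (Suc l)
  obtain k where "k < n" "apow (Suc l) i j = apow l i k + A k j"
    using apow_Suc_attained Suc.prems by blast
  then show ?case using Suc entries_not_PInf[of k j] by simp
qed simp

lemma mp_star_not_PInf:
  assumes "i < n" "j < n"
  shows "mp_star n A i j \<noteq> \<infinity>"
proof -
  obtain l where "mp_star n A i j = apow l i j"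
    using finite_SUP_attained[of "{..<n}" "\<lambda>l. apow l i j"] assms unfolding mp_star_def by auto
  then show ?thesis using apow_not_PInf assms by simp
qed

lemma apow_1:
  assumes "i < n" "j < n"
  shows "apow 1 i j = A i j"
proof -
  have "apow 1 i j = (SUP k\<in>{..<n}. apow 0 i k + A k j)" using apow_Suc[of 0] by simp
  also have "\<dots> = A i j"
    using assms entries_not_PInf[of _ j] by (intro antisym SUP_least SUP_upper2[of i]) auto
  finally show ?thesis .
qed

lemma apow_add_ge:
  "i < n \<Longrightarrow> v < n \<Longrightarrow> j < n \<Longrightarrow> apow a i v + apow b v j \<le> apow (a + b) i j"
proof (induction b arbitrary: j)
  case 0
  then show ?case using apow_not_PInf[of i v a] by auto
next
  case (Suc b)
  show ?case
  proof (cases "apow a i v = -\<infinity>")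
    case True
    then show ?thesis using apow_not_PInf[of v j "Suc b"] Suc.prems by simp
  next
    case False
    have "apow a i v + apow (Suc b) v j = (SUP k\<in>{..<n}. apow a i v + (apow b v k + A k j))"
      unfolding apow_Suc using False Suc.prems by (intro SUP_ereal_add_right[symmetric]) auto
    also have "\<dots> \<le> (SUP k\<in>{..<n}. apow (a + b) i k + A k j)"
      using Suc by (intro SUP_mono) (auto simp: add.assoc[symmetric] intro!: add_right_mono)
    also have "\<dots> = apow (a + Suc b) i j" by (simp add: mp_mm_def)
    finally show ?thesis .
  qed
qed

lemma apow_add_le:
  assumes "i < n" "j < n"
  obtains v where "v < n" "apow (a + b) i j \<le> apow a i v + apow b v j"
  using assms(2)
proof (induction b arbitrary: j thesis)
  case 0
  then show ?case using assms(1) by auto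
next
  case (Suc b)
  obtain k where k: "k < n" "apow (Suc (a + b)) i j = apow (a + b) i k + A k j"
    using apow_Suc_attained assms(1) by blast
  obtain v where v: "v < n" "apow (a + b) i k \<le> apow a i v + apow b v k"
    using Suc.IH[OF _ k(1)] by blast
  have "apow (a + Suc b) i j \<le> apow a i v + (apow b v k + A k j)"
    using k(2) v(2) by (simp add: add.assoc[symmetric] add_right_mono)
  also have "\<dots> \<le> apow a i v + apow (Suc b) v j"
    unfolding apow_Suc using k(1) by (intro add_left_mono SUP_upper) auto
  finally show ?case using Suc.prems v(1) by blast
qed

lemma walk_weight_le_apow:
  assumes "a \<le> b" "\<forall>t\<le>b. f t < n"
  shows "walk_weight A f a b \<le> apow (b - a) (f a) (f b)"
  using assms
proof (induction b)
  case 0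
  then show ?case by (simp add: walk_weight_def)
next
  case (Suc b)
  show ?case
  proof (cases "a = Suc b")
    case True
    then show ?thesis by (simp add: walk_weight_def)
  next
    case False
    then have ab: "a \<le> b" using Suc.prems by simp
    have "walk_weight A f a (Suc b) \<le> apow (b - a) (f a) (f b) + A (f b) (f (Suc b))"
      using Suc ab by (simp add: walk_weight_Suc add_right_mono)
    also have "\<dots> \<le> apow (Suc (b - a)) (f a) (f (Suc b))"
      unfolding apow_Suc using Suc.prems by (intro SUP_upper) auto
    also have "\<dots> = apow (Suc b - a) (f a) (f (Suc b))" by (simp only: Suc_diff_le[OF ab])
    finally show ?thesis .
  qed
qed

lemma apow_walk:
  assumes "i < n" "j < n" "apow l i j \<noteq> -\<infinity>"
  obtains f where "f 0 = i" "f l = j" "\<forall>t\<le>l. f t < n" "apow l i j = walk_weight A f 0 l"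
  using assms(2,3)
proof (induction l arbitrary: j thesis)
  case 0
  then show ?case by (auto simp: walk_weight_def split: if_splits)
next
  case (Suc l)
  obtain k where k: "k < n" "apow (Suc l) i j = apow l i k + A k j"
    using apow_Suc_attained assms(1) by blast
  then have "apow l i k \<noteq> -\<infinity>" using Suc.prems entries_not_PInf by auto
  then obtain f where f: "f 0 = i" "f l = k" "\<forall>t\<le>l. f t < n" "apow l i k = walk_weight A f 0 l"
    using Suc.IH[OF _ k(1)] by blast
  define g where "g = f(Suc l := j)"
  have "walk_weight A g 0 l = walk_weight A f 0 l"
    unfolding walk_weight_def g_def by (intro sum.cong) auto
  then have "apow (Suc l) i j = walk_weight A g 0 (Suc l)"
    using k f by (simp add: walk_weight_Suc g_def)
  moreover have "g 0 = i" "g (Suc l) = j" "\<forall>t\<le>Suc l. g t < n"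
    using f Suc.prems by (auto simp: g_def le_Suc_eq)
  ultimately show ?case using Suc.prems(1) by blast
qed

lemma eigen_apow_le:
  assumes "mp_eigen x" "k < n" "j < n"
  shows "apow l k j + ereal (x j) \<le> ereal (x k)"
  using assms(3)
proof (induction l arbitrary: j)
  case 0
  then show ?case by simp
next
  case (Suc l)
  obtain t where t: "t < n" "apow (Suc l) k j = apow l k t + A t j"
    using apow_Suc_attained assms(2) by blast
  have "A t j + ereal (x j) \<le> mp_mv {..<n} A (\<lambda>k. ereal (x k)) t"
    unfolding mp_mv_def using Suc.prems by (intro SUP_upper) auto
  then have "A t j + ereal (x j) \<le> ereal (x t)" using assms(1) t(1) by (simp add: mp_eigen_def)
  then have "apow l k t + (A t j + ereal (x j)) \<le> apow l k t + ereal (x t)" by (rule add_left_mono)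
  also have "\<dots> \<le> ereal (x k)" using Suc.IH[OF t(1)] .
  finally show ?case using t by (simp add: add.assoc)
qed

end

locale mp_definite = mp_matrix +
  assumes dim_pos: "0 < n" and Tr_eq_0: "mp_Tr n A = 0"
begin

lemma lessThan_nonempty [simp]: "{..<n} \<noteq> {}"
  using dim_pos by auto

lemma apow_cycle_le_0:
  assumes "1 \<le> c" "c \<le> n" "v < n"
  shows "apow c v v \<le> 0"
proof -
  have "apow c v v \<le> mp_tr n (apow c)" unfolding mp_tr_def using assms(3) by (intro SUP_upper) auto
  also have "\<dots> \<le> mp_Tr n A" unfolding mp_Tr_def using assms by (intro SUP_upper) auto
  finally show ?thesis using Tr_eq_0 by simp
qed

lemma Tr_attained:
  obtains c v where "1 \<le> c" "c \<le> n" "v < n" "apow c v v = 0"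
proof -
  obtain c where c: "c \<in> {1..n}" "mp_Tr n A = mp_tr n (apow c)"
    using finite_SUP_attained[of "{1..n}" "\<lambda>c. mp_tr n (apow c)"] dim_pos unfolding mp_Tr_def by auto
  obtain v where v: "v \<in> {..<n}" "mp_tr n (apow c) = apow c v v"
    using finite_SUP_attained[of "{..<n}" "\<lambda>v. apow c v v"] dim_pos unfolding mp_tr_def by auto
  show ?thesis using that c v Tr_eq_0 by auto
qed

definition max_walk :: mpmat where
  "max_walk i j = (SUP l\<in>{1..n}. apow l i j)"

definition critical :: "nat \<Rightarrow> bool" where
  "critical j \<longleftrightarrow> j < n \<and> max_walk j j = 0"

lemma max_walk_ge: "1 \<le> l \<Longrightarrow> l \<le> n \<Longrightarrow> apow l i j \<le> max_walk i j"
  unfolding max_walk_def by (intro SUP_upper) auto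

lemma max_walk_attained:
  obtains l where "1 \<le> l" "l \<le> n" "max_walk i j = apow l i j"
  using finite_SUP_attained[of "{1..n}" "\<lambda>l. apow l i j"] dim_pos that
  unfolding max_walk_def by auto

lemma max_walk_not_PInf: "i < n \<Longrightarrow> j < n \<Longrightarrow> max_walk i j \<noteq> \<infinity>"
  using apow_not_PInf max_walk_attained[of i j] by metis

lemma max_walk_diag_le_0: "j < n \<Longrightarrow> max_walk j j \<le> 0"
  using apow_cycle_le_0 max_walk_attained[of j j] by metis

text \<open>Walks longer than n contain a cycle, whose weight is at most 0 since Tr A = 0;
  cutting it out does not decrease the weight.\<close>

lemma apow_le_max_walk: "1 \<le> l \<Longrightarrow> i < n \<Longrightarrow> j < n \<Longrightarrow> apow l i j \<le> max_walk i j"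
proof (induction l arbitrary: i j rule: less_induct)
  case (less l)
  consider "l \<le> n" | "apow l i j = -\<infinity>" | "n < l" "apow l i j \<noteq> -\<infinity>" by fastforce
  then show ?case
  proof cases
    case 3
    obtain f where f: "f 0 = i" "f l = j" "\<forall>t\<le>l. f t < n" "apow l i j = walk_weight A f 0 l"
      using apow_walk less.prems 3(2) by blast
    have "\<forall>t\<le>n. f t < n" using f(3) 3(1) by auto
    then obtain a b where ab: "a < b" "b \<le> n" "f a = f b" by (rule pigeonhole_repeat)
    define v where "v = f a"
    have v: "v < n" using f(3) ab 3(1) by (simp add: v_def)
    have "apow l i j = walk_weight A f 0 a + walk_weight A f a b + walk_weight A f b l"
      using f(4) ab 3(1) walk_weight_split[of a b l A f] walk_weight_split[of 0 a l A f]
      by (simp add: add.assoc)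
    also have "\<dots> \<le> apow a i v + 0 + apow (l - b) v j"
    proof (intro add_mono)
      show "walk_weight A f 0 a \<le> apow a i v"
        using walk_weight_le_apow[of 0 a f] f ab 3(1) by (simp add: v_def)
      have "walk_weight A f a b \<le> apow (b - a) v v"
        using walk_weight_le_apow[of a b f] f ab 3(1) by (simp add: v_def)
      also have "\<dots> \<le> 0" using ab v by (intro apow_cycle_le_0) auto
      finally show "walk_weight A f a b \<le> 0" .
      show "walk_weight A f b l \<le> apow (l - b) v j"
        using walk_weight_le_apow[of b l f] f ab 3(1) by (simp add: v_def)
    qed
    also have "\<dots> \<le> apow (a + (l - b)) i j" using apow_add_ge less.prems v by simp
    also have "\<dots> \<le> max_walk i j" using ab 3(1) less.prems by (intro less.IH) auto
    finally show ?thesis .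
  qed (use less.prems max_walk_ge in auto)
qed

lemma mp_cross_eq_max_walk:
  assumes "i < n" "j < n"
  shows "mp_cross n A i j = max_walk i j"
proof (rule antisym)
  have bound: "A i k + apow l k j \<le> max_walk i j" if "k < n" "l < n" for k l
    using apow_1[OF assms(1) that(1)] apow_add_ge[OF assms(1) that(1) assms(2), of 1 l]
      apow_le_max_walk[OF _ assms, of "1 + l"] by simp
  have "A i k + mp_star n A k j \<le> max_walk i j" if k: "k < n" for k
  proof (cases "A i k = -\<infinity>")
    case False
    have "A i k + mp_star n A k j = (SUP l\<in>{..<n}. A i k + apow l k j)"
      unfolding mp_star_def using False dim_pos by (intro SUP_ereal_add_right[symmetric]) auto
    also have "\<dots> \<le> max_walk i j" using k bound by (intro SUP_least) auto
    finally show ?thesis .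
  qed (simp add: mp_star_not_PInf assms k)
  then show "mp_cross n A i j \<le> max_walk i j"
    unfolding mp_cross_def mp_mm_def by (intro SUP_least) auto
next
  show "max_walk i j \<le> mp_cross n A i j"
    unfolding max_walk_def
  proof (rule SUP_least)
    fix l assume l: "l \<in> {1..n}"
    obtain v where v: "v < n" "apow (1 + (l - 1)) i j \<le> apow 1 i v + apow (l - 1) v j"
      using apow_add_le assms by blast
    have l1: "1 + (l - 1) = l" using l by simp
    have "apow l i j \<le> A i v + apow (l - 1) v j" using v(2) unfolding l1 apow_1[OF assms(1) v(1)] .
    also have "\<dots> \<le> A i v + mp_star n A v j"
      unfolding mp_star_def using l by (intro add_left_mono SUP_upper) auto
    also have "\<dots> \<le> mp_cross n A i j"
      unfolding mp_cross_def mp_mm_def using v by (intro SUP_upper) auto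
    finally show "apow l i j \<le> mp_cross n A i j" .
  qed
qed

lemma step_max_walk_le:
  assumes "i < n" "k < n" "j < n"
  shows "A i k + max_walk k j \<le> max_walk i j"
proof -
  obtain l where l: "1 \<le> l" "l \<le> n" "max_walk k j = apow l k j" using max_walk_attained by blast
  have "A i k + max_walk k j = apow 1 i k + apow l k j" using l apow_1 assms by simp
  also have "\<dots> \<le> apow (1 + l) i j" using apow_add_ge assms by blast
  also have "\<dots> \<le> max_walk i j" using assms by (intro apow_le_max_walk) auto
  finally show ?thesis .
qed

lemma critical_max_walk_step:
  assumes "critical j" "i < n"
  obtains k where "k < n" "max_walk i j \<le> A i k + max_walk k j"
proof -
  have j: "j < n" "max_walk j j = 0" using assms(1) by (simp_all add: critical_def)
  obtain l where l: "1 \<le> l" "l \<le> n" "max_walk i j = apow l i j" using max_walk_attained by blast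
  obtain k where k: "k < n" "apow (1 + (l - 1)) i j \<le> apow 1 i k + apow (l - 1) k j"
    using apow_add_le assms(2) j(1) by blast
  have l1: "1 + (l - 1) = l" using l by simp
  have "apow (l - 1) k j \<le> max_walk k j"
    using j k(1) by (cases "l - 1 = 0") (auto intro: apow_le_max_walk)
  then have "max_walk i j \<le> A i k + max_walk k j"
    using k(2) l(3) unfolding l1 apow_1[OF assms(2) k(1)] by (metis add_left_mono order_trans)
  then show ?thesis using that k(1) by blast
qed

lemma eigen_max_walk_le:
  "mp_eigen x \<Longrightarrow> k < n \<Longrightarrow> j < n \<Longrightarrow> max_walk k j + ereal (x j) \<le> ereal (x k)"
  using eigen_apow_le max_walk_attained[of k j] by metis

lemma eigen_successor:
  assumes "mp_eigen x"
  obtains s where "\<And>k. k < n \<Longrightarrow> s k < n \<and> ereal (x k) = A k (s k) + ereal (x (s k))"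
proof -
  have "\<exists>t<n. ereal (x k) = A k t + ereal (x t)" if k: "k < n" for k
  proof -
    obtain t where "t \<in> {..<n}" "(SUP t\<in>{..<n}. A k t + ereal (x t)) = A k t + ereal (x t)"
      using finite_SUP_attained[of "{..<n}" "\<lambda>t. A k t + ereal (x t)"] k by auto
    then show ?thesis using assms k unfolding mp_eigen_def mp_mv_def by auto
  qed
  then obtain s where "\<And>k. k < n \<Longrightarrow> s k < n \<and> ereal (x k) = A k (s k) + ereal (x (s k))"
    by metis
  then show ?thesis by (rule that)
qed

text \<open>Following the maximising successors from i, the path must close a cycle; the eigenvector
  equation forces that cycle to have weight 0, so it passes through a critical index.\<close>

lemma eigen_critical_bound:
  assumes eigen: "mp_eigen x" and i: "i < n"
  obtains j where "critical j" "ereal (x i) \<le> max_walk i j + ereal (x j)"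
proof -
  obtain s where s: "\<And>k. k < n \<Longrightarrow> s k < n \<and> ereal (x k) = A k (s k) + ereal (x (s k))"
    using eigen_successor eigen by blast
  define f where "f t = (s ^^ t) i" for t
  have f_lt: "f t < n" for t by (induction t) (use i s in \<open>auto simp: f_def\<close>)
  have telescope: "ereal (x (f a)) = walk_weight A f a (a + d) + ereal (x (f (a + d)))" for a d
  proof (induction d)
    case (Suc d)
    then show ?case using s[OF f_lt[of "a + d"]]
      by (simp add: walk_weight_Suc f_def add.assoc)
  qed (simp add: walk_weight_def)
  obtain a b where ab: "a < b" "b \<le> n" "f a = f b" using pigeonhole_repeat[where f=f] f_lt by blast
  define j where "j = f a"
  have j: "j < n" using f_lt by (simp add: j_def)
  have "ereal (x j) = walk_weight A f a b + ereal (x j)"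
    using telescope[of a "b - a"] ab by (simp add: j_def)
  then have "walk_weight A f a b = 0" by (cases "walk_weight A f a b") auto
  moreover have "walk_weight A f a b \<le> max_walk j j"
    using order_trans[OF walk_weight_le_apow[of a b f] max_walk_ge[of "b - a"]] ab f_lt
    by (simp add: j_def)
  ultimately have "critical j" using max_walk_diag_le_0[OF j] j by (simp add: critical_def)
  moreover have "ereal (x i) \<le> max_walk i j + ereal (x j)"
  proof (cases "a = 0")
    case True
    then show ?thesis using \<open>critical j\<close> by (simp add: j_def f_def critical_def)
  next
    case False
    have "walk_weight A f 0 a \<le> apow a i j"
      using walk_weight_le_apow[of 0 a f] f_lt by (simp add: j_def f_def)
    also have "\<dots> \<le> max_walk i j" using False ab by (intro max_walk_ge) auto
    finally show ?thesis using telescope[of 0 a] by (simp add: j_def f_def add_right_mono)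
  qed
  ultimately show ?thesis using that by blast
qed

end

locale mp_irreducible_definite = mp_definite +
  assumes irreducible: "mp_irreducible n A"
begin

lemma apow_reachable:
  assumes "i < n" "j < n"
  shows "\<exists>l. apow l i j \<noteq> -\<infinity>"
proof (rule ccontr)
  assume unreachable: "\<nexists>l. apow l i j \<noteq> -\<infinity>"
  define S where "S = {k. k < n \<and> (\<exists>l. apow l i k \<noteq> -\<infinity>)}"
  have "\<not> mp_irreducible n A"
  proof (rule closed_subset_not_irreducible)
    show "S \<subseteq> {..<n}" by (auto simp: S_def)
    have "apow 0 i i \<noteq> -\<infinity>" by simp
    then have "i \<in> S" using assms(1) unfolding S_def by blast
    then show "S \<noteq> {}" by blast
    show "S \<noteq> {..<n}" using unreachable assms by (auto simp: S_def)
  next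
    fix a b assume a: "a \<in> S" and b: "b \<in> {..<n} - S"
    show "A a b = -\<infinity>"
    proof (rule ccontr)
      assume "A a b \<noteq> -\<infinity>"
      obtain l where l: "a < n" "apow l i a \<noteq> -\<infinity>" using a by (auto simp: S_def)
      have "apow l i a + apow 1 a b \<noteq> -\<infinity>"
        using l b \<open>A a b \<noteq> -\<infinity>\<close> apow_1 by simp
      moreover have "apow l i a + apow 1 a b \<le> apow (l + 1) i b"
        by (rule apow_add_ge) (use assms l b in auto)
      ultimately have "apow (l + 1) i b \<noteq> -\<infinity>" by (metis ereal_infty_less_eq(2) order_trans)
      then have "b \<in> S" using b unfolding S_def by blast
      then show False using b by simp
    qed
  qed
  then show False using irreducible by contradiction
qed

text \<open>Detouring through a cycle of weight 0 (which exists as Tr A = 0) makes the walk nonempty.\<close>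

lemma max_walk_not_MInf:
  assumes "i < n" "j < n"
  shows "max_walk i j \<noteq> -\<infinity>"
proof -
  obtain c v where c: "1 \<le> c" "c \<le> n" "v < n" "apow c v v = 0" by (rule Tr_attained)
  obtain l1 l2 where l: "apow l1 i v \<noteq> -\<infinity>" "apow l2 v j \<noteq> -\<infinity>"
    using apow_reachable assms c(3) by metis
  have "apow l1 i v + apow c v v + apow l2 v j \<le> apow (l1 + c) i v + apow l2 v j"
    using apow_add_ge assms c(3) by (intro add_right_mono) simp
  also have "\<dots> \<le> apow (l1 + c + l2) i j" using apow_add_ge assms c(3) by simp
  also have "\<dots> \<le> max_walk i j" using c(1) assms by (intro apow_le_max_walk) auto
  finally show ?thesis using l c(4) by auto
qed

definition max_walk_real :: "nat \<Rightarrow> nat \<Rightarrow> real" where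
  "max_walk_real i j = real_of_ereal (max_walk i j)"

lemma max_walk_eq_real: "i < n \<Longrightarrow> j < n \<Longrightarrow> max_walk i j = ereal (max_walk_real i j)"
  unfolding max_walk_real_def using max_walk_not_PInf max_walk_not_MInf
  by (cases "max_walk i j") auto

lemma step_max_walk_real_le:
  "i < n \<Longrightarrow> k < n \<Longrightarrow> j < n \<Longrightarrow> A i k = ereal a \<Longrightarrow> a + max_walk_real k j \<le> max_walk_real i j"
  using step_max_walk_le[of i k j] by (simp add: max_walk_eq_real)

lemma critical_max_walk_real_step:
  assumes "critical j" "i < n"
  obtains k a where "k < n" "A i k = ereal a" "max_walk_real i j \<le> a + max_walk_real k j"
proof -
  have j: "j < n" using assms(1) by (simp add: critical_def)
  obtain k where k: "k < n" "max_walk i j \<le> A i k + max_walk k j"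
    using critical_max_walk_step assms by blast
  then show ?thesis
    using that entries_not_PInf[OF assms(2) k(1)] assms(2) j
    by (cases "A i k") (auto simp: max_walk_eq_real)
qed

lemma eigen_max_walk_real_le:
  "mp_eigen x \<Longrightarrow> k < n \<Longrightarrow> j < n \<Longrightarrow> max_walk_real k j + x j \<le> x k"
  using eigen_max_walk_le[of x k j] by (simp add: max_walk_eq_real)

lemma eigen_critical_real_bound:
  assumes "mp_eigen x" "i < n"
  obtains j where "critical j" "x i \<le> max_walk_real i j + x j"
  using eigen_critical_bound[OF assms] assms(2) that by (auto simp: critical_def max_walk_eq_real)

end

locale mp_Aplus = mp_irreducible_definite +
  fixes J :: "nat set"
  assumes Aplus_cols: "mp_Aplus_cols n A J"
begin

lemma mp_col_repl_eq:
  "i < n \<Longrightarrow> mp_col_repl n A i j = (if critical j then ereal (max_walk_real i j) else -\<infinity>)"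
  unfolding mp_col_repl_def mp_kept_def critical_def
  using mp_cross_eq_max_walk max_walk_eq_real by auto

lemma Aplus_critical: "j \<in> J \<Longrightarrow> critical j"
proof (rule ccontr)
  assume j: "j \<in> J" "\<not> critical j"
  have "mp_dependent n (\<lambda>i. mp_col_repl n A i j) (mp_col_repl n A) (J - {j})"
    unfolding mp_dependent_def
  proof (intro exI[of _ "\<lambda>_. -\<infinity>"] conjI ballI allI impI)
    fix i assume i: "i < n"
    have "(SUP k\<in>J - {j}. -\<infinity> + mp_col_repl n A i k) \<le> -\<infinity>"
      using i by (intro SUP_least) (simp add: mp_col_repl_eq)
    then show "mp_col_repl n A i j = (SUP k\<in>J - {j}. -\<infinity> + mp_col_repl n A i k)"
      using i j(2) by (simp add: mp_col_repl_eq)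
  qed simp
  then show False using Aplus_cols j(1) unfolding mp_Aplus_cols_def by blast
qed

lemma Aplus_finite: "finite J"
  using Aplus_cols finite_subset unfolding mp_Aplus_cols_def by blast

lemma Aplus_nonempty: "J \<noteq> {}"
proof
  assume J: "J = {}"
  obtain c v where c: "1 \<le> c" "c \<le> n" "v < n" "apow c v v = 0" by (rule Tr_attained)
  then have "critical v"
    using max_walk_ge[of c v v] max_walk_diag_le_0[of v] by (simp add: critical_def)
  moreover have "mp_dependent n (\<lambda>i. mp_col_repl n A i v) (mp_col_repl n A) J"
    using Aplus_cols c(3) unfolding mp_Aplus_cols_def by blast
  ultimately show False
    using c(3) J unfolding mp_dependent_def by (auto simp: mp_col_repl_eq bot_ereal_def)
qed

lemma critical_column_span:
  assumes "critical j" "i < n"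
  obtains k c where "k \<in> J" "max_walk_real i j = c + max_walk_real i k"
    "\<And>l. l < n \<Longrightarrow> c + max_walk_real l k \<le> max_walk_real l j"
proof -
  obtain c where c_fin: "\<forall>k\<in>J. c k \<noteq> \<infinity>"
    and c: "\<And>l. l < n \<Longrightarrow> mp_col_repl n A l j = (SUP k\<in>J. c k + mp_col_repl n A l k)"
    using Aplus_cols assms(1) unfolding mp_Aplus_cols_def mp_dependent_def critical_def by blast
  obtain k where k: "k \<in> J" "(SUP k\<in>J. c k + mp_col_repl n A i k) = c k + mp_col_repl n A i k"
    using finite_SUP_attained[OF Aplus_finite Aplus_nonempty] by blast
  have col: "mp_col_repl n A l k = ereal (max_walk_real l k)"
    "mp_col_repl n A l j = ereal (max_walk_real l j)" if "l < n" for l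
    using that Aplus_critical[OF k(1)] assms(1) by (simp_all add: mp_col_repl_eq)
  have row_i: "ereal (max_walk_real i j) = c k + ereal (max_walk_real i k)"
    using c[OF assms(2)] k(2) col[OF assms(2)] by simp
  then obtain ck where ck: "c k = ereal ck" using c_fin k(1) by (cases "c k") auto
  have "c k + mp_col_repl n A l k \<le> mp_col_repl n A l j" if "l < n" for l
    unfolding c[OF that] using k(1) by (rule SUP_upper)
  then show ?thesis using that[OF k(1)] row_i col ck by simp
qed

text \<open>The row vector q^- A^+ and the column vector A^+ (q^- A^+)^- of the paper in real
  coordinates; A^+ consists of the columns of A^x indexed by J.\<close>

definition qAplus :: "(nat \<Rightarrow> real) \<Rightarrow> nat \<Rightarrow> real" where
  "qAplus q j = Max ((\<lambda>k. q k + max_walk_real k j) ` {..<n})"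

definition Aplus_sol :: "(nat \<Rightarrow> real) \<Rightarrow> nat \<Rightarrow> real" where
  "Aplus_sol q i = Max ((\<lambda>j. max_walk_real i j - qAplus q j) ` J)"

lemma qAplus_ge: "k < n \<Longrightarrow> q k + max_walk_real k j \<le> qAplus q j"
  unfolding qAplus_def by (intro Max_ge) auto

lemma qAplus_attained:
  obtains k where "k < n" "qAplus q j = q k + max_walk_real k j"
  using Max_image_attained[of "{..<n}" "\<lambda>k. q k + max_walk_real k j"] dim_pos
  unfolding qAplus_def by auto

lemma Aplus_sol_ge: "j \<in> J \<Longrightarrow> max_walk_real i j - qAplus q j \<le> Aplus_sol q i"
  unfolding Aplus_sol_def using Aplus_finite by (intro Max_ge) auto

lemma Aplus_sol_attained:
  obtains j where "j \<in> J" "Aplus_sol q i = max_walk_real i j - qAplus q j"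
  using Max_image_attained[OF Aplus_finite Aplus_nonempty] unfolding Aplus_sol_def by blast

lemma mp_mv_Aplus_sol:
  assumes "\<And>k. k < n \<Longrightarrow> qm k = ereal (q k)" "i < n"
  shows "mp_mv J (mp_col_repl n A) (mp_pinv (mp_vm {..<n} qm (mp_col_repl n A))) i
    = ereal (Aplus_sol q i)"
proof -
  have "mp_vm {..<n} qm (mp_col_repl n A) j = ereal (qAplus q j)" if "j \<in> J" for j
    unfolding mp_vm_def qAplus_def using assms(1) Aplus_critical[OF that] dim_pos
    by (simp add: mp_col_repl_eq SUP_ereal_eq_Max[symmetric])
  then show ?thesis
    unfolding mp_mv_def Aplus_sol_def using assms(2) Aplus_critical Aplus_finite Aplus_nonempty
    by (simp add: mp_col_repl_eq mp_pinv_ereal SUP_ereal_eq_Max[symmetric])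
qed

lemma Aplus_sol_eigen: "mp_eigen (\<lambda>i. c + Aplus_sol q i)"
  unfolding mp_eigen_def mp_mv_def
proof (intro allI impI antisym)
  fix i assume i: "i < n"
  show "(SUP k\<in>{..<n}. A i k + ereal (c + Aplus_sol q k)) \<le> ereal (c + Aplus_sol q i)"
  proof (rule SUP_least)
    fix k assume k: "k \<in> {..<n}"
    show "A i k + ereal (c + Aplus_sol q k) \<le> ereal (c + Aplus_sol q i)"
    proof (cases "A i k")
      case (real a)
      obtain j where j: "j \<in> J" "Aplus_sol q k = max_walk_real k j - qAplus q j"
        by (rule Aplus_sol_attained)
      have "a + max_walk_real k j \<le> max_walk_real i j"
        using step_max_walk_real_le i k real Aplus_critical[OF j(1)] by (simp add: critical_def)
      moreover have "max_walk_real i j - qAplus q j \<le> Aplus_sol q i" using j(1) by (rule Aplus_sol_ge)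
      ultimately show ?thesis using real j(2) by simp
    qed (use entries_not_PInf i k in auto)
  qed
next
  fix i assume i: "i < n"
  obtain j where j: "j \<in> J" "Aplus_sol q i = max_walk_real i j - qAplus q j"
    by (rule Aplus_sol_attained)
  obtain k a where k: "k < n" "A i k = ereal a" "max_walk_real i j \<le> a + max_walk_real k j"
    using critical_max_walk_real_step Aplus_critical[OF j(1)] i by blast
  have "max_walk_real k j - qAplus q j \<le> Aplus_sol q k" using j(1) by (rule Aplus_sol_ge)
  then have "ereal (c + Aplus_sol q i) \<le> A i k + ereal (c + Aplus_sol q k)" using j(2) k by simp
  also have "\<dots> \<le> (SUP k\<in>{..<n}. A i k + ereal (c + Aplus_sol q k))"
    using k(1) by (intro SUP_upper) auto
  finally show "ereal (c + Aplus_sol q i) \<le> (SUP k\<in>{..<n}. A i k + ereal (c + Aplus_sol q k))" .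
qed

lemma q_Aplus_sol_Max: "Max ((\<lambda>k. q k + Aplus_sol q k) ` {..<n}) = 0"
proof (rule antisym)
  have "q k + Aplus_sol q k \<le> 0" if "k < n" for k
  proof -
    obtain j where "j \<in> J" "Aplus_sol q k = max_walk_real k j - qAplus q j"
      by (rule Aplus_sol_attained)
    then show ?thesis using qAplus_ge[OF that, of q j] by simp
  qed
  then show "Max ((\<lambda>k. q k + Aplus_sol q k) ` {..<n}) \<le> 0" by (simp add: Max_le_iff)
next
  obtain j where j: "j \<in> J" using Aplus_nonempty by blast
  obtain k where k: "k < n" "qAplus q j = q k + max_walk_real k j" by (rule qAplus_attained)
  have "0 \<le> q k + Aplus_sol q k" using Aplus_sol_ge[OF j, of k q] k(2) by simp
  also have "\<dots> \<le> Max ((\<lambda>k. q k + Aplus_sol q k) ` {..<n})" using k(1) by (intro Max_ge) auto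
  finally show "0 \<le> Max ((\<lambda>k. q k + Aplus_sol q k) ` {..<n})" .
qed

lemma eigen_le_Aplus_sol:
  assumes "mp_eigen x" "i < n"
  shows "x i \<le> Max ((\<lambda>l. q l + x l) ` {..<n}) + Aplus_sol q i"
proof -
  obtain j where j: "critical j" "x i \<le> max_walk_real i j + x j"
    using eigen_critical_real_bound assms by blast
  obtain k c where k: "k \<in> J" "max_walk_real i j = c + max_walk_real i k"
    and below: "\<And>l. l < n \<Longrightarrow> c + max_walk_real l k \<le> max_walk_real l j"
    using critical_column_span j(1) assms(2) by blast
  obtain l where l: "l < n" "qAplus q k = q l + max_walk_real l k" by (rule qAplus_attained)
  have "max_walk_real l j + x j \<le> x l"
    using eigen_max_walk_real_le assms(1) l(1) j(1) by (simp add: critical_def)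
  moreover have "q l + x l \<le> Max ((\<lambda>l. q l + x l) ` {..<n})" using l(1) by (intro Max_ge) auto
  moreover have "max_walk_real i k - qAplus q k \<le> Aplus_sol q i" using k(1) by (rule Aplus_sol_ge)
  ultimately show ?thesis using j(2) k(2) below[OF l(1)] l(2) by linarith
qed

lemma Aplus_sol_shifted_values:
  assumes "d = Max ((\<lambda>k. p k - Aplus_sol q k) ` {..<n})"
  shows "Max ((\<lambda>k. p k - (d / 2 + Aplus_sol q k)) ` {..<n}) = d / 2"
    and "Max ((\<lambda>k. q k + (d / 2 + Aplus_sol q k)) ` {..<n}) = d / 2"
proof -
  have "Max ((\<lambda>k. p k - (d / 2 + Aplus_sol q k)) ` {..<n})
      = Max ((\<lambda>k. (p k - Aplus_sol q k) + - (d / 2)) ` {..<n})"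
    by (simp add: algebra_simps)
  also have "\<dots> = Max ((\<lambda>k. p k - Aplus_sol q k) ` {..<n}) + - (d / 2)"
    by (rule Max_add_commute) auto
  finally show "Max ((\<lambda>k. p k - (d / 2 + Aplus_sol q k)) ` {..<n}) = d / 2" using assms by linarith
  have "Max ((\<lambda>k. q k + (d / 2 + Aplus_sol q k)) ` {..<n})
      = Max ((\<lambda>k. (q k + Aplus_sol q k) + d / 2) ` {..<n})"
    by (simp add: algebra_simps)
  also have "\<dots> = d / 2" by (subst Max_add_commute) (auto simp: q_Aplus_sol_Max)
  finally show "Max ((\<lambda>k. q k + (d / 2 + Aplus_sol q k)) ` {..<n}) = d / 2" .
qed

lemma eigen_lower_bound:
  assumes "mp_eigen x" "d = Max ((\<lambda>k. p k - Aplus_sol q k) ` {..<n})"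
  shows "d / 2 \<le> max (Max ((\<lambda>k. p k - x k) ` {..<n})) (Max ((\<lambda>k. q k + x k) ` {..<n}))"
proof -
  obtain k where k: "k < n" "d = p k - Aplus_sol q k"
    using Max_image_attained[of "{..<n}" "\<lambda>k. p k - Aplus_sol q k"] assms(2) dim_pos by auto
  have "p k - x k \<le> Max ((\<lambda>k. p k - x k) ` {..<n})" using k(1) by (intro Max_ge) auto
  then show ?thesis using eigen_le_Aplus_sol[OF assms(1) k(1), of q] k(2) by linarith
qed

lemma eigen_minimum:
  fixes pr qr :: "nat \<Rightarrow> real"
  assumes p: "\<And>k. k < n \<Longrightarrow> p k = ereal (pr k)" and q: "\<And>k. k < n \<Longrightarrow> qm k = ereal (qr k)"
    and phi_def: "\<phi> = (\<lambda>x. max (mp_dot {..<n} (mp_pinv x) p) (mp_dot {..<n} qm x))"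
    and S0_def: "S0 = {x. (\<forall>j<n. x j \<noteq> \<infinity> \<and> x j \<noteq> -\<infinity>) \<and> (\<forall>i<n. mp_mv {..<n} A x i = x i)}"
    and u_def: "u = mp_mv J (mp_col_repl n A) (mp_pinv (mp_vm {..<n} qm (mp_col_repl n A)))"
    and Delta_def: "\<Delta> = mp_dot {..<n} (mp_pinv u) p / 2"
    and x0_def: "x0 = (\<lambda>i. \<Delta> + u i)"
  shows "x0 \<in> S0 \<and> \<phi> x0 = \<Delta> \<and> (\<forall>x\<in>S0. \<Delta> \<le> \<phi> x)"
proof -
  define d where "d = Max ((\<lambda>k. pr k - Aplus_sol qr k) ` {..<n})"
  have u: "u k = ereal (Aplus_sol qr k)" if "k < n" for k
    unfolding u_def using mp_mv_Aplus_sol q that by blast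
  have "mp_dot {..<n} (mp_pinv u) p = ereal (Max ((\<lambda>k. - Aplus_sol qr k + pr k) ` {..<n}))"
    by (rule mp_dot_ereal_Max) (use u p in \<open>simp_all add: mp_pinv_def\<close>)
  then have \<Delta>: "\<Delta> = ereal (d / 2)" unfolding Delta_def d_def by simp
  have \<phi>: "\<phi> y = ereal (max (Max ((\<lambda>k. pr k - yr k) ` {..<n})) (Max ((\<lambda>k. qr k + yr k) ` {..<n})))"
    if "\<And>k. k < n \<Longrightarrow> y k = ereal (yr k)" for y yr
    unfolding phi_def using that p q by (intro max_mp_dot_ereal) auto
  have x0: "x0 k = ereal (d / 2 + Aplus_sol qr k)" if "k < n" for k
    using that by (simp add: x0_def \<Delta> u)
  have "x0 \<in> S0"
    unfolding S0_def using x0 mp_eigen_iff[OF x0] Aplus_sol_eigen[of "d / 2" qr] by auto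
  moreover have "\<phi> x0 = \<Delta>"
  proof -
    have "\<phi> x0 = ereal (max (Max ((\<lambda>k. pr k - (d / 2 + Aplus_sol qr k)) ` {..<n}))
        (Max ((\<lambda>k. qr k + (d / 2 + Aplus_sol qr k)) ` {..<n})))"
      by (rule \<phi>) (rule x0)
    then show ?thesis unfolding Aplus_sol_shifted_values[OF d_def] \<Delta> by simp
  qed
  moreover have "\<Delta> \<le> \<phi> x" if "x \<in> S0" for x
  proof -
    define xr where "xr k = real_of_ereal (x k)" for k
    have x: "x k = ereal (xr k)" if "k < n" for k
      using \<open>x \<in> S0\<close> that unfolding S0_def xr_def by (cases "x k") auto
    then have "mp_eigen xr" using mp_eigen_iff \<open>x \<in> S0\<close> unfolding S0_def by blast
    have \<phi>_x: "\<phi> x = ereal (max (Max ((\<lambda>k. pr k - xr k) ` {..<n})) (Max ((\<lambda>k. qr k + xr k) ` {..<n})))"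
      by (rule \<phi>) (rule x)
    show ?thesis
      unfolding \<phi>_x \<Delta> ereal_less_eq(3) by (rule eigen_lower_bound[OF \<open>mp_eigen xr\<close> d_def])
  qed
  ultimately show ?thesis by blast
qed

end

theorem theorem6:
  fixes n m :: nat and r :: "nat \<Rightarrow> nat \<Rightarrow> real" and w :: "nat \<Rightarrow> real"
    and A :: mpmat and J :: "nat set"
    and p qm u x0 :: mpvec and \<phi> :: "mpvec \<Rightarrow> ereal" and S0 :: "mpvec set" and \<Delta> :: ereal
  assumes n_pos: "1 \<le> n" and m_pos: "1 \<le> m"
    and A_entries: "\<forall>i<n. \<forall>j<n. A i j \<noteq> \<infinity>"
    and A_irr: "mp_irreducible n A"
    and A_Tr: "mp_Tr n A = 0"
    and Aplus: "mp_Aplus_cols n A J"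
    and p_def: "p = (\<lambda>j. SUP i\<in>{..<m}. ereal (w i) + ereal (r i j))"
    and qm_def: "qm = (\<lambda>j. SUP i\<in>{..<m}. ereal (w i) + mp_pinv (\<lambda>k. ereal (r i k)) j)"
    and phi_def: "\<phi> = (\<lambda>x. max (mp_dot {..<n} (mp_pinv x) p) (mp_dot {..<n} qm x))"
    and S0_def: "S0 = {x. (\<forall>j<n. x j \<noteq> \<infinity> \<and> x j \<noteq> -\<infinity>) \<and> (\<forall>i<n. mp_mv {..<n} A x i = x i)}"
    and u_def: "u = mp_mv J (mp_col_repl n A) (mp_pinv (mp_vm {..<n} qm (mp_col_repl n A)))"
    and Delta_def: "\<Delta> = mp_dot {..<n} (mp_pinv u) p / 2"
    and x0_def: "x0 = (\<lambda>i. \<Delta> + u i)"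
  shows "x0 \<in> S0 \<and> \<phi> x0 = \<Delta> \<and> (\<forall>x\<in>S0. \<Delta> \<le> \<phi> x)"
proof -
  interpret mp_Aplus n A J
    using A_entries n_pos A_Tr A_irr Aplus by unfold_locales auto
  have m: "{..<m} \<noteq> {}" using m_pos by (auto simp: lessThan_empty_iff)
  define pr qr where "pr k = Max ((\<lambda>i. w i + r i k) ` {..<m})"
    and "qr k = Max ((\<lambda>i. w i - r i k) ` {..<m})" for k
  have p: "p k = ereal (pr k)" and q: "qm k = ereal (qr k)" if "k < n" for k
    unfolding p_def qm_def pr_def qr_def mp_pinv_def
    by (simp_all add: SUP_ereal_eq_Max[OF finite_lessThan m])
  show ?thesis by (rule eigen_minimum[OF p q phi_def S0_def u_def Delta_def x0_def])
qed

end
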